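(* For every integer $m\ge 0$ and every integer $n\ge 0$, $$x^n=\sum_{k=0}^{\lfloor n/2\rfloor}\frac{n!}{k!\,(n-2k)!}\,\frac{(n+m-2k)!}{(n+m-k)!}\,(-s)^k\, l_{n-2k}(x,m,s).$$ Consequently, if $\Lambda_m$ denotes the linear functional on polynomials in $x$ (with coefficients rational functions of $s$) determined by $\Lambda_m(l_n(x,m,s))=[n=0]$ for all $n\ge 0$, then $\Lambda_m(x^{2n+1})=0$ and $$\Lambda_m(x^{2n})=(-s)^n\,\sigma(m,n)=(-s)^n\frac{(2n)!\,m!}{n!\,(m+n)!}\quad\text{for all } n\ge 0.$$
   Context: For an integer $m\ge 0$ and indeterminates $x,s$, $$l_n(x,m,s)=\sum_{k=0}^{\lfloor n/2\rfloor}\frac{n!}{k!\,(n-2k)!}\,\frac{1}{\prod_{j=1}^{k}(m+n-j)}\,s^k x^{n-2k}\qquad(n\ge 0),$$ empty products being $1$. The normalized super Catalan numbers are $\sigma(m,n)=\frac{(2n)!\,m!}{n!\,(n+m)!}$. $[P]$ is the Iverson bracket. *)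

theory Defs
  imports "HOL-Computational_Algebra.Polynomial"
begin

text \<open>The polynomial l_n(x,m,s) in the variable x, with s an element of a field of
  characteristic 0 (e.g. the field of rational functions in s).\<close>
definition lpoly :: "nat \<Rightarrow> nat \<Rightarrow> 'a::field_char_0 \<Rightarrow> 'a poly" where
  "lpoly n m s = (\<Sum>k\<le>n div 2.
      smult (fact n / (fact k * fact (n - 2*k)) / (\<Prod>j=1..k. of_nat (m + n - j)) * s ^ k)
            ([:0, 1:] ^ (n - 2*k)))"

definition sigma :: "nat \<Rightarrow> nat \<Rightarrow> 'a::field_char_0" where
  "sigma m n = fact (2*n) * fact m / (fact n * fact (n + m))"

end

theory Submission
  imports Defs
begin

text \<open>Write \<open>N = n + m\<close> and \<open>c_k = n!/(k!(n-2k)!) \<cdot> (N-2k)!/(N-k)! \<cdot> (-s)^k\<close>.  Expanding each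
  \<open>l_{n-2k}\<close> in \<open>\<Sum>_k c_k l_{n-2k}\<close> into monomials, the coefficient of \<open>x^{n-2r}\<close> becomes
  \<open>s^r n!/(r!(n-2r)!)\<close> times the alternating sum
  \<open>\<Sum>_k (-1)^k C(r,k) ((N-k-r)! + (r-k)(N-k-r-1)!)/(N-k)!\<close>, which vanishes for \<open>r > 0\<close>
  by Pascal's rule together with a telescoping identity for reciprocal falling factorials.  Applying a linear functional \<open>\<Lambda>\<close> with \<open>\<Lambda>(l_n) = [n = 0]\<close>
  keeps only the term \<open>n = 2k\<close>, so odd moments vanish and \<open>\<Lambda>(x^{2n}) = c_n = (-s)^n \<sigma>(m,n)\<close>.\<close>

text \<open>Pascal's rule in summation form: an alternating binomial sum of order \<open>q+1\<close>
  is the alternating binomial sum of order \<open>q\<close> of the forward differences of \<open>f\<close>.\<close>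
lemma alternating_binomial_difference:
  fixes f :: "nat \<Rightarrow> 'a::comm_ring_1"
  shows "(\<Sum>k\<le>Suc q. (-1)^k * of_nat (Suc q choose k) * f k)
       = (\<Sum>k\<le>q. (-1)^k * of_nat (q choose k) * (f k - f (Suc k)))"
proof -
  have top_vanishes: "(\<Sum>k\<le>Suc q. (-1)^k * of_nat (q choose k) * f k)
      = (\<Sum>k\<le>q. (-1)^k * of_nat (q choose k) * f k)"
    by (simp add: binomial_eq_0)
  have "(\<Sum>k\<le>Suc q. (-1)^k * of_nat (Suc q choose k) * f k)
      = f 0 - (\<Sum>k\<le>q. (-1)^k * (of_nat (q choose k) + of_nat (q choose Suc k)) * f (Suc k))"
    by (subst sum.atMost_Suc_shift) (simp add: sum_negf)
  also have "\<dots> = (\<Sum>k\<le>Suc q. (-1)^k * of_nat (q choose k) * f k)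
      - (\<Sum>k\<le>q. (-1)^k * of_nat (q choose k) * f (Suc k))"
    by (simp add: sum.atMost_Suc_shift algebra_simps sum.distrib sum_negf del: sum.atMost_Suc)
  finally show ?thesis
    by (simp only: top_vanishes flip: sum_subtractf right_diff_distrib)
qed

lemma fact_quotient_difference:
  "(fact (Suc L) / fact (Suc (L + r)) :: 'a::field_char_0) - fact L / fact (L + r)
     = - of_nat r * (fact L / fact (Suc (L + r)))"
  by (simp add: field_simps del: of_nat_Suc) (simp add: algebra_simps)

text \<open>Writing
  \<open>A k = (N-k-r)!/(N-k)!\<close> and \<open>B k = (N-k-r-1)!/(N-k)!\<close>, Pascal's rule and the forward
  difference above give \<open>\<Sum> (-1)^k C(r,k) A k = -r \<Sum> (-1)^k C(r-1,k) B k\<close>, while the absorption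
  identity \<open>(r-k) C(r,k) = r C(r-1,k)\<close> turns the \<open>B\<close>-part into the negative of this.\<close>
lemma alternating_fact_sum_vanishes:
  fixes N r :: nat
  assumes "0 < r" "2*r \<le> N"
  shows "(\<Sum>k\<le>r. (-1)^k * of_nat (r choose k)
            * ((fact (N-k-r) + of_nat (r-k) * fact (N-k-r-1)) / fact (N-k))) = (0::'a::field_char_0)"
proof -
  obtain q where r: "r = Suc q" using assms(1) gr0_implies_Suc by blast
  define A where "A k = (fact (N-k-r) / fact (N-k) :: 'a)" for k
  define B where "B k = (fact (N-k-r-1) / fact (N-k) :: 'a)" for k
  have A_step: "A k - A (Suc k) = - of_nat r * B k" if "k \<le> q" for k
  proof -
    define L where "L = N - k - r - 1"
    have "N - k - r = Suc L" "N - k = Suc (L + r)" "N - Suc k - r = L" "N - Suc k = L + r"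
      using that assms(2) unfolding L_def r by auto
    then show ?thesis
      unfolding A_def B_def L_def[symmetric] by (simp only: fact_quotient_difference)
  qed
  have absorb: "of_nat (r choose k) * of_nat (r - k) = (of_nat r * of_nat (q choose k) :: 'a)" for k
    using binomial_absorb_comp[of r k] unfolding r by (simp only: mult.commute of_nat_mult[symmetric]) simp
  have "(\<Sum>k\<le>r. (-1)^k * of_nat (r choose k) * A k)
      = (\<Sum>k\<le>q. (-1)^k * of_nat (q choose k) * (A k - A (Suc k)))"
    unfolding r by (rule alternating_binomial_difference)
  also have "\<dots> = - of_nat r * (\<Sum>k\<le>q. (-1)^k * of_nat (q choose k) * B k)"
    by (simp add: A_step sum_distrib_left algebra_simps)
  finally have A_sum: "(\<Sum>k\<le>r. (-1)^k * of_nat (r choose k) * A k)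
      = - of_nat r * (\<Sum>k\<le>q. (-1)^k * of_nat (q choose k) * B k)" .
  have "(\<Sum>k\<le>r. (-1)^k * of_nat (r choose k) * (of_nat (r-k) * B k))
      = (\<Sum>k\<le>r. of_nat r * ((-1)^k * of_nat (q choose k) * B k))"
    by (rule sum.cong[OF refl]) (metis absorb mult.assoc mult.left_commute)
  also have "\<dots> = of_nat r * (\<Sum>k\<le>q. (-1)^k * of_nat (q choose k) * B k)"
    by (simp add: r binomial_eq_0 flip: sum_distrib_left)
  finally have B_sum: "(\<Sum>k\<le>r. (-1)^k * of_nat (r choose k) * (of_nat (r-k) * B k))
      = of_nat r * (\<Sum>k\<le>q. (-1)^k * of_nat (q choose k) * B k)" .
  have "(\<Sum>k\<le>r. (-1)^k * of_nat (r choose k)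
            * ((fact (N-k-r) + of_nat (r-k) * fact (N-k-r-1)) / fact (N-k)))
      = (\<Sum>k\<le>r. (-1)^k * of_nat (r choose k) * A k)
        + (\<Sum>k\<le>r. (-1)^k * of_nat (r choose k) * (of_nat (r-k) * B k))"
    unfolding A_def B_def by (simp add: add_divide_distrib ring_distribs sum.distrib)
  also have "\<dots> = 0"
    unfolding A_sum B_sum by simp
  finally show ?thesis .
qed

lemma prod_falling_fact:
  "j \<le> b \<Longrightarrow> (\<Prod>i=1..j. of_nat (Suc b - i) :: 'a::field_char_0) = fact b / fact (b - j)"
proof (induction j)
  case 0 then show ?case by simp
next
  case (Suc j)
  have "b - j = Suc (b - Suc j)" using Suc.prems by simp
  then have fact_step: "fact (b - j) = (of_nat (b - j) * fact (b - Suc j) :: 'a)"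
    by (simp del: of_nat_Suc)
  have "(\<Prod>i=1..Suc j. of_nat (Suc b - i) :: 'a) = fact b / fact (b - j) * of_nat (b - j)"
    using Suc by (simp add: prod.cl_ivl_Suc)
  also have "\<dots> = fact b / fact (b - Suc j)"
    using Suc.prems by (simp add: fact_step)
  finally show ?case .
qed

text \<open>The factor \<open>(N-2k)!/((N-2k-1)\<cdots>(N-k-r))\<close> arising when the coefficient of \<open>x^{n-2r}\<close>
  is collected, split as \<open>(N-k-r)! + (r-k)(N-k-r-1)!\<close>; the split form is also valid
  in the boundary case \<open>k = r\<close>, where the product is empty.\<close>
lemma fact_over_falling_product:
  assumes "k \<le> r" "2*r \<le> N"
  shows "(fact (N - 2*k) :: 'a::field_char_0) / (\<Prod>i=1..r-k. of_nat (N - 2*k - i))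
       = fact (N-k-r) + of_nat (r-k) * fact (N-k-r-1)"
proof (cases "k = r")
  case True then show ?thesis by (simp add: mult_2)
next
  case False
  define L where "L = N - k - r - 1"
  have N: "N - 2*k = Suc (L + (r - k))" "N - k - r = Suc L" "N - k - r - 1 = L"
    using assms False unfolding L_def by auto
  have prod: "(\<Prod>i=1..r-k. of_nat (N - 2*k - i) :: 'a) = fact (L + (r - k)) / fact L"
    using prod_falling_fact[of "r - k" "L + (r - k)", where 'a='a] by (simp add: N(1))
  have "(fact (N - 2*k) :: 'a) / (\<Prod>i=1..r-k. of_nat (N - 2*k - i))
      = fact (Suc (L + (r - k))) / (fact (L + (r - k)) / fact L)"
    by (subst prod) (simp only: N(1))
  also have "\<dots> = of_nat (Suc L + (r - k)) * fact L"
    by (simp add: field_simps del: of_nat_Suc)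
  also have "\<dots> = fact (Suc L) + of_nat (r - k) * fact L"
    by (simp add: algebra_simps)
  finally show ?thesis using N by simp
qed

lemma trinomial_fact:
  assumes "k \<le> r" "2*r \<le> n"
  shows "fact n / (fact k * fact (n - 2*k)) * (fact (n - 2*k) / (fact (r-k) * fact (n - 2*k - 2*(r-k))))
       = fact n / (fact r * fact (n - 2*r)) * (of_nat (r choose k) :: 'a::field_char_0)"
proof -
  have "n - 2*k - 2*(r-k) = n - 2*r" using assms by simp
  moreover have "(of_nat (r choose k) :: 'a) = fact r / (fact k * fact (r - k))"
    using assms(1) by (simp add: binomial_fact)
  ultimately show ?thesis by (simp add: field_simps)
qed

definition expansion_coeff :: "nat \<Rightarrow> 'a::field_char_0 \<Rightarrow> nat \<Rightarrow> nat \<Rightarrow> 'a" where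
  "expansion_coeff m s n k =
     fact n / (fact k * fact (n - 2*k)) * (fact (n + m - 2*k) / fact (n + m - k)) * (- s) ^ k"

definition lpoly_coeff :: "nat \<Rightarrow> 'a::field_char_0 \<Rightarrow> nat \<Rightarrow> nat \<Rightarrow> 'a" where
  "lpoly_coeff m s n j = fact n / (fact j * fact (n - 2*j)) / (\<Prod>i=1..j. of_nat (m + n - i)) * s ^ j"

lemma lpoly_altdef:
  "lpoly n m s = (\<Sum>j\<le>n div 2. smult (lpoly_coeff m s n j) ([:0, 1:] ^ (n - 2*j)))"
  by (simp add: lpoly_def lpoly_coeff_def)

lemma coefficient_product:
  fixes s :: "'a::field_char_0"
  assumes "k \<le> r" "2*r \<le> n"
  shows "expansion_coeff m s n k * lpoly_coeff m s (n - 2*k) (r - k)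
       = s^r * (fact n / (fact r * fact (n - 2*r)))
         * ((-1)^k * of_nat (r choose k)
            * ((fact (n+m-k-r) + of_nat (r-k) * fact (n+m-k-r-1)) / fact (n+m-k)))"
proof -
  have shift: "m + (n - 2*k) - i = (n + m) - 2*k - i" for i using assms by simp
  have sign: "(- s) ^ k * s ^ (r - k) = (-1)^k * s^r"
    using assms(1) by (simp add: power_minus' flip: power_add)
  have "expansion_coeff m s n k * lpoly_coeff m s (n - 2*k) (r - k)
      = (fact n / (fact k * fact (n - 2*k)) * (fact (n - 2*k) / (fact (r-k) * fact (n - 2*k - 2*(r-k)))))
        * (fact (n + m - 2*k) / (\<Prod>i=1..r-k. of_nat (n + m - 2*k - i))) / fact (n + m - k)
        * ((- s) ^ k * s ^ (r - k))"
    unfolding expansion_coeff_def lpoly_coeff_def shift by (simp add: field_simps)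
  also have "\<dots> = fact n / (fact r * fact (n - 2*r)) * of_nat (r choose k)
        * (fact (n+m-k-r) + of_nat (r-k) * fact (n+m-k-r-1)) / fact (n + m - k) * ((-1)^k * s^r)"
    using assms
    by (simp only: trinomial_fact[OF assms] fact_over_falling_product[OF assms(1)] sign)
  finally show ?thesis by (simp add: mult_ac)
qed

lemma coefficient_sum:
  fixes s :: "'a::field_char_0"
  assumes "2*r \<le> n"
  shows "(\<Sum>k\<le>r. expansion_coeff m s n k * lpoly_coeff m s (n - 2*k) (r - k))
       = (if r = 0 then 1 else 0)"
proof (cases "r = 0")
  case True
  then show ?thesis by (simp add: expansion_coeff_def lpoly_coeff_def)
next
  case False
  have "(\<Sum>k\<le>r. expansion_coeff m s n k * lpoly_coeff m s (n - 2*k) (r - k))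
      = s^r * (fact n / (fact r * fact (n - 2*r)))
        * (\<Sum>k\<le>r. (-1)^k * of_nat (r choose k)
            * ((fact (n+m-k-r) + of_nat (r-k) * fact (n+m-k-r-1)) / fact (n+m-k)))"
    using assms by (simp add: coefficient_product sum_distrib_left)
  also have "\<dots> = 0"
    using alternating_fact_sum_vanishes[of r "n + m", where 'a='a] False assms by simp
  finally show ?thesis using False by simp
qed

lemma additive_map_sum:
  fixes L :: "'a::ab_group_add \<Rightarrow> 'b::ab_group_add"
  assumes additive: "\<And>p q. L (p + q) = L p + L q"
  shows "L (\<Sum>k\<in>A. f k) = (\<Sum>k\<in>A. L (f k))"
proof -
  have "L 0 = 0" using additive[of 0 0] by simp
  then show ?thesis using sum_comp_morphism[of L f A] additive by (simp add: comp_def)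
qed

text \<open>First part of the theorem: expanding every \<open>l_{n-2k}\<close> into monomials and regrouping
  the double sum by \<open>r = k + j\<close> leaves only the term \<open>x^n\<close>.\<close>
lemma monomial_in_lpoly_basis:
  fixes s :: "'a::field_char_0"
  shows "[:0, 1:] ^ n = (\<Sum>k\<le>n div 2. smult (expansion_coeff m s n k) (lpoly (n - 2*k) m s))"
proof -
  define h where "h = n div 2"
  let ?c = "expansion_coeff m s n" and ?d = "\<lambda>k. lpoly_coeff m s (n - 2*k)"
  have "(\<Sum>k\<le>h. smult (?c k) (lpoly (n - 2*k) m s))
      = (\<Sum>k\<le>h. \<Sum>j\<le>h-k. smult (?c k * ?d k j) ([:0,1:] ^ (n - 2*(k+j))))"
  proof (rule sum.cong[OF refl])
    fix k assume "k \<in> {..h}"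
    then have "(n - 2*k) div 2 = h - k" "\<And>j. n - 2*k - 2*j = n - 2*(k+j)"
      unfolding h_def by auto
    then show "smult (?c k) (lpoly (n - 2*k) m s)
             = (\<Sum>j\<le>h-k. smult (?c k * ?d k j) ([:0,1:] ^ (n - 2*(k+j))))"
      unfolding lpoly_altdef by (simp add: additive_map_sum smult_add_right)
  qed
  also have "\<dots> = (\<Sum>(k,j)\<in>{(k,j). k+j \<le> h}. smult (?c k * ?d k j) ([:0,1:] ^ (n - 2*(k+j))))"
  proof -
    have "{(k,j). k+j \<le> h} = Sigma {..h} (\<lambda>k. {..h-k})" by auto
    then show ?thesis by (simp add: sum.Sigma)
  qed
  also have "\<dots> = (\<Sum>r\<le>h. \<Sum>k\<le>r. smult (?c k * ?d k (r-k)) ([:0,1:] ^ (n - 2*(k+(r-k)))))"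
    by (rule sum.triangle_reindex_eq)
  also have "\<dots> = (\<Sum>r\<le>h. smult (\<Sum>k\<le>r. ?c k * ?d k (r-k)) ([:0,1:] ^ (n - 2*r)))"
    by (simp add: smult_sum)
  also have "\<dots> = (\<Sum>r\<le>h. smult (if r = 0 then 1 else 0) ([:0,1:] ^ (n - 2*r)))"
    by (rule sum.cong[OF refl]) (simp add: coefficient_sum h_def)
  also have "\<dots> = [:0,1:] ^ n"
    by (simp add: sum.atMost_shift del: sum.atMost_Suc)
  finally show ?thesis unfolding h_def by simp
qed

text \<open>Applying a linear functional normalised on the \<open>l_n\<close> to the expansion of \<open>x^N\<close> keeps
  only the term with \<open>N - 2k = 0\<close>.\<close>
lemma moment_of_monomial:
  fixes \<Lambda> :: "'a::field_char_0 poly \<Rightarrow> 'a"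
  assumes additive: "\<And>p q. \<Lambda> (p + q) = \<Lambda> p + \<Lambda> q"
    and homogeneous: "\<And>c p. \<Lambda> (smult c p) = c * \<Lambda> p"
    and normalized: "\<And>n. \<Lambda> (lpoly n m s) = (if n = 0 then 1 else 0)"
  shows "\<Lambda> ([:0, 1:] ^ N) = (if even N then expansion_coeff m s N (N div 2) else 0)"
proof -
  have "\<Lambda> ([:0, 1:] ^ N) = (\<Sum>k\<le>N div 2. expansion_coeff m s N k * (if N - 2*k = 0 then 1 else 0))"
    by (subst monomial_in_lpoly_basis[of N m s])
       (simp add: additive_map_sum[of \<Lambda>, OF additive] homogeneous normalized)
  also have "\<dots> = (\<Sum>k\<le>N div 2. if even N \<and> k = N div 2 then expansion_coeff m s N k else 0)"
    by (rule sum.cong[OF refl]) (auto elim!: oddE)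
  also have "\<dots> = (if even N then expansion_coeff m s N (N div 2) else 0)"
    by (simp add: sum.delta')
  finally show ?thesis .
qed

lemma expansion_coeff_diagonal:
  "expansion_coeff m s (2*n) n = (- s) ^ n * sigma m n"
  by (simp add: expansion_coeff_def sigma_def field_simps add.commute)

theorem mainTheorem4:
  fixes s :: "'a::field_char_0" and m :: nat
  shows "(\<forall>n. [:0, 1:] ^ n =
            (\<Sum>k\<le>n div 2.
               smult (fact n / (fact k * fact (n - 2*k)) * (fact (n + m - 2*k) / fact (n + m - k))
                      * (- s) ^ k)
                     (lpoly (n - 2*k) m s)))
       \<and> (\<forall>\<Lambda> :: 'a poly \<Rightarrow> 'a.
            (\<forall>p q. \<Lambda> (p + q) = \<Lambda> p + \<Lambda> q) \<and>
            (\<forall>c p. \<Lambda> (smult c p) = c * \<Lambda> p) \<and>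
            (\<forall>n. \<Lambda> (lpoly n m s) = (if n = 0 then 1 else 0))
            \<longrightarrow> (\<forall>n. \<Lambda> ([:0, 1:] ^ (2*n+1)) = 0 \<and>
                      \<Lambda> ([:0, 1:] ^ (2*n)) = (- s) ^ n * sigma m n))"
proof (intro conjI allI impI)
  fix n
  show "[:0, 1:] ^ n =
            (\<Sum>k\<le>n div 2.
               smult (fact n / (fact k * fact (n - 2*k)) * (fact (n + m - 2*k) / fact (n + m - k))
                      * (- s) ^ k)
                     (lpoly (n - 2*k) m s))"
    using monomial_in_lpoly_basis[of n m s] by (simp only: expansion_coeff_def)
next
  fix \<Lambda> :: "'a poly \<Rightarrow> 'a" and n
  assume "(\<forall>p q. \<Lambda> (p + q) = \<Lambda> p + \<Lambda> q) \<and> (\<forall>c p. \<Lambda> (smult c p) = c * \<Lambda> p) \<and>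
          (\<forall>n. \<Lambda> (lpoly n m s) = (if n = 0 then 1 else 0))"
  then have moments: "\<Lambda> ([:0, 1:] ^ N) = (if even N then expansion_coeff m s N (N div 2) else 0)"
    for N by (intro moment_of_monomial) blast+
  show "\<Lambda> ([:0, 1:] ^ (2*n+1)) = 0"
    using moments[of "2*n+1"] by simp
  show "\<Lambda> ([:0, 1:] ^ (2*n)) = (- s) ^ n * sigma m n"
    by (simp add: moments expansion_coeff_diagonal)
qed

end
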